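(* Let $\{A_n\}_{n\geqslant 1}$ be i.i.d. nonnegative random variables with Laplace–Stieltjes transform $\alpha(s)=\mathbb{E}[e^{-sA_1}]$, and let $\{B_n\}_{n\geqslant 1}$ be i.i.d. exponentially distributed with rate $\mu>0$, independent of $\{A_n\}$. Let $W_1=B_1$ and $W_{n+1}=\max\{0,\,B_{n+1}-A_n-W_n\}$ for $n\geqslant 1$. Then for every $n\geqslant 1$ and $x\geqslant 0$, $$\mathbb{P}[W_{n+1}\leqslant x]=1-e^{-\mu x}\left[\frac{2\alpha(\mu)}{2+\alpha(\mu)}+\left(-\frac{\alpha(\mu)}{2}\right)^{n-1}\left(\frac{1}{2}\alpha(\mu)-\frac{2\alpha(\mu)}{2+\alpha(\mu)}\right)\right].$$ *)

theory Defs
  imports "HOL-Probability.Probability"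
begin

text \<open>Indices start at 1; the value at index 0 is irrelevant junk.
  W 1 = B 1 and W (n+1) = max 0 (B (n+1) - A n - W n) for n >= 1.\<close>
fun Wseq :: "(nat \<Rightarrow> 'a \<Rightarrow> real) \<Rightarrow> (nat \<Rightarrow> 'a \<Rightarrow> real) \<Rightarrow> nat \<Rightarrow> 'a \<Rightarrow> real" where
  "Wseq A B 0 \<omega> = 0"
| "Wseq A B (Suc 0) \<omega> = B 1 \<omega>"
| "Wseq A B (Suc (Suc n)) \<omega> =
     max 0 (B (Suc (Suc n)) \<omega> - A (Suc n) \<omega> - Wseq A B (Suc n) \<omega>)"

definition LST :: "'a measure \<Rightarrow> ('a \<Rightarrow> real) \<Rightarrow> real \<Rightarrow> real" where
  "LST M X s = (\<integral>\<omega>. exp (- s * X \<omega>) \<partial>M)"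

end

theory Submission
  imports Defs
begin

text \<open>Put \<open>Z\<^sub>n = A\<^sub>n + W\<^sub>n\<close>, so that \<open>W\<^sub>n\<^sub>+\<^sub>1 = max 0 (B\<^sub>n\<^sub>+\<^sub>1 - Z\<^sub>n)\<close> with \<open>Z\<^sub>n \<ge> 0\<close>
  independent of the exponential variable \<open>B\<^sub>n\<^sub>+\<^sub>1\<close>. Conditioning on \<open>Z\<^sub>n\<close> and using the
  exponential tail gives \<open>P(W\<^sub>n\<^sub>+\<^sub>1 > x) = exp(-\<mu>x) E exp(-\<mu>Z\<^sub>n)\<close> and
  \<open>E exp(-\<mu>W\<^sub>n\<^sub>+\<^sub>1) = 1 - E exp(-\<mu>Z\<^sub>n) / 2\<close>. Since \<open>A\<^sub>n\<close> is independent of \<open>W\<^sub>n\<close>,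
  \<open>E exp(-\<mu>Z\<^sub>n) = \<alpha>(\<mu>) g\<^sub>n\<close> with \<open>g\<^sub>n = E exp(-\<mu>W\<^sub>n)\<close>. Hence \<open>g\<^sub>1 = 1/2\<close> and
  \<open>g\<^sub>n\<^sub>+\<^sub>1 = 1 - \<alpha>(\<mu>) g\<^sub>n / 2\<close>, an affine recurrence with fixed point \<open>2 / (2 + \<alpha>(\<mu>))\<close>
  and ratio \<open>-\<alpha>(\<mu>) / 2\<close>.\<close>

lemma measure_exponential_density_atMost:
  assumes "0 < l" and "0 \<le> z"
  shows "measure (density lborel (exponential_density l)) {..z} = 1 - exp (- l * z)"
proof -
  have "emeasure (density lborel (exponential_density l)) {..z} = ennreal (1 - exp (- l * z))"
    using emeasure_erlang_density[OF \<open>0 < l\<close>, of 0 z] assms by (simp add: erlang_CDF_0)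
  moreover have "exp (- l * z) \<le> 1"
    using assms by simp
  ultimately show ?thesis
    by (simp add: measure_def)
qed

lemma measure_exponential_density_greaterThan:
  assumes "0 < l" and "0 \<le> z"
  shows "measure (density lborel (exponential_density l)) {z<..} = exp (- l * z)"
proof -
  interpret prob_space "density lborel (exponential_density l)"
    using prob_space_exponential_density[OF \<open>0 < l\<close>] .
  have "{z<..} = space (density lborel (exponential_density l)) - {..z}"
    by auto
  then show ?thesis
    using prob_compl[of "{..z}"] measure_exponential_density_atMost[OF assms] by simp
qed

lemma integral_exponential_density_exp_pos_part:
  assumes l: "0 < l" and z: "0 \<le> z"
  shows "(\<integral>b. exp (- l * max 0 (b - z)) \<partial>density lborel (exponential_density l))
    = 1 - exp (- l * z) / 2"
proof -
  let ?D = "density lborel (exponential_density l)"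
  let ?tail = "\<lambda>b. indicator {z<..} b * (exp (l * z) * exp (- l * b)) :: real"
  interpret prob_space ?D
    using prob_space_exponential_density[OF l] .
  have split: "exp (- l * max 0 (b - z)) = indicator {..z} b + ?tail b" for b
    by (auto simp: indicator_def max_def exp_add[symmetric] algebra_simps)
  have tail_le_1: "norm (?tail b) \<le> 1" for b
  proof -
    have "z < b \<Longrightarrow> exp (l * z) * exp (- l * b) \<le> 1"
      using l by (simp add: exp_add[symmetric] mult_left_mono)
    then show ?thesis
      by (auto simp: indicator_def)
  qed
  have int_head: "integrable ?D (indicator {..z} :: real \<Rightarrow> real)"
    by (rule integrable_const_bound[where B=1]) auto
  have int_tail: "integrable ?D ?tail"
    by (rule integrable_const_bound[where B=1]) (use tail_le_1 in auto)
  \<comment> \<open>Against the density \<open>l exp(-lb)\<close>, the tail integrand is \<open>exp(lz)/2\<close> times the rate-\<open>2l\<close> density.\<close>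
  have "(\<integral>b. ?tail b \<partial>?D) = (\<integral>b. exponential_density l b *\<^sub>R ?tail b \<partial>lborel)"
    by (rule integral_density) (use l in \<open>auto simp: exponential_density_nonneg\<close>)
  also have "\<dots> = (\<integral>b. exp (l * z) / 2 * (exponential_density (2*l) b *\<^sub>R indicator {z<..} b) \<partial>lborel)"
    by (rule Bochner_Integration.integral_cong)
       (auto simp: exponential_density_def indicator_def exp_add[symmetric] algebra_simps)
  also have "\<dots> = exp (l * z) / 2 * measure (density lborel (exponential_density (2*l))) {z<..}"
    using integral_density[of "indicator {z<..} :: real \<Rightarrow> real" lborel "exponential_density (2*l)"] l
    by (simp add: exponential_density_nonneg)
  also have "\<dots> = exp (- l * z) / 2"
    using measure_exponential_density_greaterThan[of "2*l" z] l z
    by (simp add: exp_add[symmetric] algebra_simps)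
  finally have tail: "(\<integral>b. ?tail b \<partial>?D) = exp (- l * z) / 2" .
  have "(\<integral>b. exp (- l * max 0 (b - z)) \<partial>?D) = (\<integral>b. indicator {..z} b \<partial>?D) + (\<integral>b. ?tail b \<partial>?D)"
    unfolding split by (rule Bochner_Integration.integral_add[OF int_head int_tail])
  then show ?thesis
    using measure_exponential_density_atMost[OF l z] tail by simp
qed

lemma (in prob_space) integral_indep_var_iterated:
  fixes X Y :: "'a \<Rightarrow> real" and h :: "real \<times> real \<Rightarrow> real"
  assumes ind: "indep_var borel X borel Y"
    and [measurable]: "h \<in> borel_measurable (borel \<Otimes>\<^sub>M borel)"
    and bounded: "\<And>p. \<bar>h p\<bar> \<le> c"
  shows "(\<integral>\<omega>. h (X \<omega>, Y \<omega>) \<partial>M) = (\<integral>y. (\<integral>x. h (x, y) \<partial>distr M borel X) \<partial>distr M borel Y)"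
proof -
  have [measurable]: "X \<in> borel_measurable M" "Y \<in> borel_measurable M"
    and joint: "distr M borel X \<Otimes>\<^sub>M distr M borel Y = distr M (borel \<Otimes>\<^sub>M borel) (\<lambda>\<omega>. (X \<omega>, Y \<omega>))"
    using ind indep_var_distribution_eq by auto
  interpret PX: prob_space "distr M borel X"
    by (rule prob_space_distr) simp
  interpret PY: prob_space "distr M borel Y"
    by (rule prob_space_distr) simp
  interpret PXY: pair_prob_space "distr M borel X" "distr M borel Y" ..
  have "integrable (distr M borel X \<Otimes>\<^sub>M distr M borel Y) (case_prod (\<lambda>x y. h (x, y)))"
    by (rule PXY.integrable_const_bound[where B=c]) (use bounded in auto)
  from PXY.integral_snd[OF this]
  have "(\<integral>p. h p \<partial>(distr M borel X \<Otimes>\<^sub>M distr M borel Y))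
      = (\<integral>y. (\<integral>x. h (x, y) \<partial>distr M borel X) \<partial>distr M borel Y)"
    by simp
  then show ?thesis
    by (subst integral_distr[symmetric]) (auto simp: joint)
qed

lemma distributed_distr_borel_eq_density:
  assumes "distributed M lborel X f"
  shows "distr M borel X = density lborel f"
  using distributed_distr_eq_density[OF assms] distr_cong[of M M lborel borel X X] by simp

lemma LST_nonneg: "0 \<le> LST M X s"
  unfolding LST_def by (rule integral_nonneg_AE) simp

context prob_space
begin

lemma LST_eq_if_distr_eq:
  assumes [measurable]: "X \<in> borel_measurable M" "Y \<in> borel_measurable M"
    and "distr M borel X = distr M borel Y"
  shows "LST M X s = LST M Y s"
proof -
  have "LST M X s = (\<integral>x. exp (- s * x) \<partial>distr M borel X)"
    unfolding LST_def by (subst integral_distr) auto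
  also have "\<dots> = LST M Y s"
    unfolding LST_def \<open>distr M borel X = distr M borel Y\<close> by (subst integral_distr) auto
  finally show ?thesis .
qed

lemma integrable_exp_neg_mult:
  fixes X :: "'a \<Rightarrow> real"
  assumes [measurable]: "X \<in> borel_measurable M"
    and "AE \<omega> in M. 0 \<le> X \<omega>" and "0 \<le> s"
  shows "integrable M (\<lambda>\<omega>. exp (- s * X \<omega>))"
proof (rule integrable_const_bound[where B=1])
  show "AE \<omega> in M. norm (exp (- s * X \<omega>)) \<le> 1"
    using \<open>AE \<omega> in M. 0 \<le> X \<omega>\<close> by eventually_elim (use \<open>0 \<le> s\<close> in simp)
qed simp

lemma LST_add_indep:
  assumes ind: "indep_var borel X borel Y"
    and "AE \<omega> in M. 0 \<le> X \<omega>" "AE \<omega> in M. 0 \<le> Y \<omega>" and "0 \<le> s"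
  shows "LST M (\<lambda>\<omega>. X \<omega> + Y \<omega>) s = LST M X s * LST M Y s"
proof -
  have [measurable]: "X \<in> borel_measurable M" "Y \<in> borel_measurable M"
    using indep_var_rv1[OF ind] indep_var_rv2[OF ind] by auto
  have "LST M (\<lambda>\<omega>. X \<omega> + Y \<omega>) s = (\<integral>\<omega>. exp (- s * X \<omega>) * exp (- s * Y \<omega>) \<partial>M)"
    unfolding LST_def by (simp add: algebra_simps exp_add[symmetric])
  also have "\<dots> = LST M X s * LST M Y s"
    unfolding LST_def
    by (intro indep_var_lebesgue_integral indep_var_compose[unfolded comp_def, OF ind]
        integrable_exp_neg_mult assms) auto
  finally show ?thesis .
qed

lemma LST_exponential_self:
  assumes B: "distributed M lborel X (exponential_density l)" and l: "0 < l"
  shows "LST M X l = 1 / 2"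
proof -
  have [measurable]: "X \<in> borel_measurable M"
    using distributed_measurable[OF B] by simp
  have distr_X: "distr M borel X = density lborel (exponential_density l)"
    by (rule distributed_distr_borel_eq_density[OF B])
  have "AE b in density lborel (exponential_density l). exp (- l * b) = exp (- l * max 0 (b - 0))"
    by (subst AE_density) (auto simp: exponential_density_def)
  then have "(\<integral>b. exp (- l * b) \<partial>distr M borel X) = (\<integral>b. exp (- l * max 0 (b - 0)) \<partial>distr M borel X)"
    unfolding distr_X by (intro integral_cong_AE) auto
  also have "\<dots> = 1 / 2"
    unfolding distr_X integral_exponential_density_exp_pos_part[OF l order.refl] by simp
  finally show ?thesis
    unfolding LST_def by (subst (asm) integral_distr) auto
qed

lemma LST_pos_part_exponential_minus:
  assumes B: "distributed M lborel B (exponential_density l)" and l: "0 < l"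
    and [measurable]: "Z \<in> borel_measurable M" and Z_nonneg: "AE \<omega> in M. 0 \<le> Z \<omega>"
    and ind: "indep_var borel B borel Z"
  shows "LST M (\<lambda>\<omega>. max 0 (B \<omega> - Z \<omega>)) l = 1 - LST M Z l / 2"
proof -
  let ?D = "density lborel (exponential_density l)"
  interpret D: prob_space ?D
    using prob_space_exponential_density[OF l] .
  have [measurable]: "B \<in> borel_measurable M"
    using distributed_measurable[OF B] by simp
  have AE_distr_nonneg: "AE z in distr M borel Z. 0 \<le> z"
    using Z_nonneg by (subst AE_distr_iff) auto
  have inner_measurable: "(\<lambda>z. \<integral>b. exp (- l * max 0 (b - z)) \<partial>?D) \<in> borel_measurable borel"
    by (rule D.borel_measurable_lebesgue_integral) auto
  have "AE z in distr M borel Z. (\<integral>b. exp (- l * max 0 (b - z)) \<partial>?D) = 1 - exp (- l * z) / 2"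
    using AE_distr_nonneg by eventually_elim (rule integral_exponential_density_exp_pos_part[OF l])
  then have inner: "(\<integral>z. (\<integral>b. exp (- l * max 0 (b - z)) \<partial>?D) \<partial>distr M borel Z)
      = (\<integral>z. 1 - exp (- l * z) / 2 \<partial>distr M borel Z)"
    using inner_measurable by (intro integral_cong_AE) auto
  have "LST M (\<lambda>\<omega>. max 0 (B \<omega> - Z \<omega>)) l
      = (\<integral>\<omega>. (\<lambda>p. exp (- l * max 0 (fst p - snd p))) (B \<omega>, Z \<omega>) \<partial>M)"
    by (simp add: LST_def)
  also have "\<dots> = (\<integral>z. (\<integral>b. exp (- l * max 0 (b - z)) \<partial>distr M borel B) \<partial>distr M borel Z)"
    by (subst integral_indep_var_iterated[OF ind, where c=1]) (use l in auto)
  also have "\<dots> = (\<integral>\<omega>. 1 - exp (- l * Z \<omega>) / 2 \<partial>M)"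
    unfolding distributed_distr_borel_eq_density[OF B] inner by (subst integral_distr) auto
  also have "\<dots> = 1 - LST M Z l / 2"
    using integrable_exp_neg_mult[OF _ Z_nonneg, of l] l by (simp add: LST_def prob_space)
  finally show ?thesis .
qed

lemma prob_pos_part_exponential_minus_le:
  assumes B: "distributed M lborel B (exponential_density l)" and l: "0 < l"
    and [measurable]: "Z \<in> borel_measurable M" and Z_nonneg: "AE \<omega> in M. 0 \<le> Z \<omega>"
    and ind: "indep_var borel B borel Z" and x: "0 \<le> x"
  shows "measure M {\<omega> \<in> space M. max 0 (B \<omega> - Z \<omega>) \<le> x} = 1 - exp (- l * x) * LST M Z l"
proof -
  let ?D = "density lborel (exponential_density l)"
  let ?exceeds = "\<lambda>p. indicator {p. x < fst p - snd p} p :: real"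
  interpret D: prob_space ?D
    using prob_space_exponential_density[OF l] .
  have [measurable]: "B \<in> borel_measurable M"
    using distributed_measurable[OF B] by simp
  have AE_distr_nonneg: "AE z in distr M borel Z. 0 \<le> z"
    using Z_nonneg by (subst AE_distr_iff) auto
  have inner_measurable: "(\<lambda>z. \<integral>b. ?exceeds (b, z) \<partial>?D) \<in> borel_measurable borel"
  proof -
    have "(\<lambda>z. \<integral>b. (of_bool (x < b - z) :: real) \<partial>?D) \<in> borel_measurable borel"
      by (rule D.borel_measurable_lebesgue_integral) auto
    then show ?thesis
      by (simp add: indicator_def)
  qed
  have tail: "(\<integral>b. ?exceeds (b, z) \<partial>?D) = exp (- l * x) * exp (- l * z)" if "0 \<le> z" for z
  proof -
    have "(\<integral>b. ?exceeds (b, z) \<partial>?D) = (\<integral>b. indicator {x + z<..} b \<partial>?D)"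
      by (intro Bochner_Integration.integral_cong) (auto simp: indicator_def)
    also have "\<dots> = exp (- l * x) * exp (- l * z)"
      using measure_exponential_density_greaterThan[OF l, of "x + z"] x that
      by (simp add: exp_add[symmetric] algebra_simps)
    finally show ?thesis .
  qed
  have "AE z in distr M borel Z. (\<integral>b. ?exceeds (b, z) \<partial>?D) = exp (- l * x) * exp (- l * z)"
    using AE_distr_nonneg by eventually_elim (rule tail)
  then have inner: "(\<integral>z. (\<integral>b. ?exceeds (b, z) \<partial>?D) \<partial>distr M borel Z)
      = (\<integral>z. exp (- l * x) * exp (- l * z) \<partial>distr M borel Z)"
    using inner_measurable by (intro integral_cong_AE) auto
  have "measure M {\<omega> \<in> space M. x < B \<omega> - Z \<omega>}
      = (\<integral>\<omega>. indicator {\<omega> \<in> space M. x < B \<omega> - Z \<omega>} \<omega> \<partial>M)"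
    by simp
  also have "\<dots> = (\<integral>\<omega>. ?exceeds (B \<omega>, Z \<omega>) \<partial>M)"
    by (intro Bochner_Integration.integral_cong) (auto simp: indicator_def)
  also have "\<dots> = (\<integral>z. (\<integral>b. ?exceeds (b, z) \<partial>distr M borel B) \<partial>distr M borel Z)"
    by (subst integral_indep_var_iterated[OF ind, where c=1]) auto
  also have "\<dots> = exp (- l * x) * LST M Z l"
    unfolding distributed_distr_borel_eq_density[OF B] inner LST_def
    by (subst integral_distr) auto
  finally have "measure M {\<omega> \<in> space M. x < B \<omega> - Z \<omega>} = exp (- l * x) * LST M Z l" .
  moreover have "{\<omega> \<in> space M. max 0 (B \<omega> - Z \<omega>) \<le> x} = space M - {\<omega> \<in> space M. x < B \<omega> - Z \<omega>}"
    using x by auto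
  ultimately show ?thesis
    using prob_compl[of "{\<omega> \<in> space M. x < B \<omega> - Z \<omega>}"] by simp
qed

end

lemma Wseq_cong:
  assumes "\<And>i. 1 \<le> i \<Longrightarrow> i < n \<Longrightarrow> A i \<omega> = A' i \<omega>'"
    and "\<And>i. 1 \<le> i \<Longrightarrow> i \<le> n \<Longrightarrow> B i \<omega> = B' i \<omega>'"
  shows "Wseq A B n \<omega> = Wseq A' B' n \<omega>'"
  using assms by (induction A B n \<omega> rule: Wseq.induct) auto

lemma measurable_Wseq:
  assumes "\<And>i. 1 \<le> i \<Longrightarrow> A i \<in> borel_measurable M"
    and "\<And>i. 1 \<le> i \<Longrightarrow> B i \<in> borel_measurable M"
  shows "Wseq A B n \<in> borel_measurable M"
proof -
  have "Wseq A B n \<in> borel_measurable M \<and> Wseq A B (Suc n) \<in> borel_measurable M"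
    by (induction n) (auto simp: assms intro!: borel_measurable_max borel_measurable_diff)
  then show ?thesis ..
qed

lemma measurable_component_PiM_borel:
  "(\<lambda>f. f j) \<in> borel_measurable (PiM K (\<lambda>_. (borel :: real measure)))"
proof (cases "j \<in> K")
  case True
  then show ?thesis
    by (rule measurable_component_singleton)
next
  case False
  then have "\<forall>f \<in> space (PiM K (\<lambda>_. (borel :: real measure))). f j = undefined"
    by (auto simp: space_PiM PiE_def extensional_def)
  then show ?thesis
    by (subst measurable_cong[where g="\<lambda>_. undefined"]) auto
qed

lemma (in prob_space) indep_var_compose_restrict:
  assumes "indep_vars M' X I" and "J \<inter> K = {}" "J \<subseteq> I" "K \<subseteq> I"
    and "f \<in> measurable (PiM J M') N" "g \<in> measurable (PiM K M') N'"
  shows "indep_var N (\<lambda>\<omega>. f (restrict (\<lambda>i. X i \<omega>) J)) N' (\<lambda>\<omega>. g (restrict (\<lambda>i. X i \<omega>) K))"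
  using indep_var_compose[OF indep_var_restrict[OF assms(1-4)] assms(5,6)] by (simp add: comp_def)

lemma affine_recurrence_closed_form:
  fixes a :: real and g :: "nat \<Rightarrow> real"
  assumes "2 + a \<noteq> 0" and "g 1 = 1 / 2"
    and g_Suc: "\<And>n. 1 \<le> n \<Longrightarrow> g (Suc n) = 1 - a * g n / 2"
    and "1 \<le> n"
  shows "g n = 2 / (2 + a) + (- a / 2) ^ (n - 1) * (1 / 2 - 2 / (2 + a))"
  using \<open>1 \<le> n\<close>
proof (induction n rule: dec_induct)
  case base
  then show ?case
    using \<open>g 1 = 1 / 2\<close> by simp
next
  case (step m)
  define q where "q = (- a / 2) ^ (m - 1)"
  have q_Suc: "(- a / 2) ^ (Suc m - 1) = - a / 2 * q"
    using step(1) unfolding q_def by (cases m) auto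
  have fixed_point: "1 - a / 2 * (2 / (2 + a)) = 2 / (2 + a)"
    using \<open>2 + a \<noteq> 0\<close> by (simp add: field_simps)
  have "g (Suc m) = 1 - a / 2 * (2 / (2 + a) + q * (1 / 2 - 2 / (2 + a)))"
    using g_Suc[OF step(1)] step(3) unfolding q_def by simp
  also have "\<dots> = (1 - a / 2 * (2 / (2 + a))) + - a / 2 * q * (1 / 2 - 2 / (2 + a))"
    by (simp add: algebra_simps)
  finally show ?case
    unfolding fixed_point q_Suc .
qed

locale Wseq_exponential_services = prob_space M
  for M :: "'a measure" and A B :: "nat \<Rightarrow> 'a \<Rightarrow> real" and \<mu> :: real +
  assumes mu_pos: "0 < \<mu>"
    and A_measurable: "\<And>n. 1 \<le> n \<Longrightarrow> A n \<in> borel_measurable M"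
    and A_nonneg: "\<And>n. 1 \<le> n \<Longrightarrow> AE \<omega> in M. 0 \<le> A n \<omega>"
    and A_ident: "\<And>n. 1 \<le> n \<Longrightarrow> distr M borel (A n) = distr M borel (A 1)"
    and B_exponential: "\<And>n. 1 \<le> n \<Longrightarrow> distributed M lborel (B n) (exponential_density \<mu>)"
    and indep: "indep_vars (\<lambda>_. borel) (\<lambda>i. case i of Inl n \<Rightarrow> A n | Inr n \<Rightarrow> B n)
                  ({Inl n | n. 1 \<le> n} \<union> {Inr n | n. 1 \<le> n})"
begin

lemma B_measurable: "1 \<le> n \<Longrightarrow> B n \<in> borel_measurable M"
  using distributed_measurable[OF B_exponential] by (metis measurable_lborel1)

lemma Wseq_measurable: "Wseq A B n \<in> borel_measurable M"
  using measurable_Wseq A_measurable B_measurable by blast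

lemma Wseq_nonneg:
  assumes "1 \<le> n"
  shows "AE \<omega> in M. 0 \<le> Wseq A B n \<omega>"
proof (cases "n = 1")
  case True
  have "prob {\<omega> \<in> space M. 0 < B 1 \<omega>} = 1"
    using exponential_distributedD_gt[OF B_exponential[of 1] _ mu_pos, of 0] by simp
  from AE_prob_1[OF this] show ?thesis
    using True by (auto elim!: AE_mp)
next
  case False
  then obtain k where "n = Suc (Suc k)"
    using assms by (metis One_nat_def Suc_le_D le_Suc_eq le_zero_eq not0_implies_Suc)
  then show ?thesis
    by simp
qed

lemma Wseq_Suc:
  "1 \<le> n \<Longrightarrow> Wseq A B (Suc n) = (\<lambda>\<omega>. max 0 (B (Suc n) \<omega> - (A n \<omega> + Wseq A B n \<omega>)))"
  by (cases n) (auto simp: fun_eq_iff algebra_simps)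

abbreviation AB :: "nat + nat \<Rightarrow> 'a \<Rightarrow> real" where
  "AB \<equiv> \<lambda>i. case i of Inl n \<Rightarrow> A n | Inr n \<Rightarrow> B n"

lemma Wseq_restrict_AB:
  assumes "{Inl i | i. 1 \<le> i \<and> i < n} \<union> {Inr i | i. 1 \<le> i \<and> i \<le> n} \<subseteq> K"
  shows "Wseq (\<lambda>i f. f (Inl i)) (\<lambda>i f. f (Inr i)) n (restrict (\<lambda>i. AB i \<omega>) K) = Wseq A B n \<omega>"
  by (rule Wseq_cong) (use assms in auto)

lemma measurable_Wseq_components:
  "Wseq (\<lambda>i f. f (Inl i)) (\<lambda>i f. f (Inr i)) n \<in> borel_measurable (PiM K (\<lambda>_. borel))"
  by (intro measurable_Wseq measurable_component_PiM_borel)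

lemma indep_B_Suc_A_plus_Wseq:
  assumes "1 \<le> n"
  shows "indep_var borel (B (Suc n)) borel (\<lambda>\<omega>. A n \<omega> + Wseq A B n \<omega>)"
proof -
  let ?K = "{Inl i | i. 1 \<le> i \<and> i \<le> n} \<union> {Inr i | i. 1 \<le> i \<and> i \<le> n}"
  have "indep_var borel (\<lambda>\<omega>. restrict (\<lambda>i. AB i \<omega>) {Inr (Suc n)} (Inr (Suc n)))
      borel (\<lambda>\<omega>. restrict (\<lambda>i. AB i \<omega>) ?K (Inl n)
        + Wseq (\<lambda>i f. f (Inl i)) (\<lambda>i f. f (Inr i)) n (restrict (\<lambda>i. AB i \<omega>) ?K))"
    using assms
    by (intro indep_var_compose_restrict[OF indep] borel_measurable_add
        measurable_component_PiM_borel measurable_Wseq_components) auto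
  moreover have "restrict (\<lambda>i. AB i \<omega>) ?K (Inl n)
      + Wseq (\<lambda>i f. f (Inl i)) (\<lambda>i f. f (Inr i)) n (restrict (\<lambda>i. AB i \<omega>) ?K)
      = A n \<omega> + Wseq A B n \<omega>" for \<omega>
    using assms by (subst Wseq_restrict_AB) auto
  ultimately show ?thesis
    by simp
qed

lemma indep_A_Wseq:
  assumes "1 \<le> n"
  shows "indep_var borel (A n) borel (Wseq A B n)"
proof -
  let ?K = "{Inl i | i. 1 \<le> i \<and> i < n} \<union> {Inr i | i. 1 \<le> i \<and> i \<le> n}"
  have "indep_var borel (\<lambda>\<omega>. restrict (\<lambda>i. AB i \<omega>) {Inl n} (Inl n))
      borel (\<lambda>\<omega>. Wseq (\<lambda>i f. f (Inl i)) (\<lambda>i f. f (Inr i)) n (restrict (\<lambda>i. AB i \<omega>) ?K))"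
    using assms
    by (intro indep_var_compose_restrict[OF indep]
        measurable_component_PiM_borel measurable_Wseq_components) auto
  then show ?thesis
    by (simp add: Wseq_restrict_AB)
qed

lemma LST_A:
  assumes "1 \<le> n"
  shows "LST M (A n) \<mu> = LST M (A 1) \<mu>"
  using LST_eq_if_distr_eq[OF A_measurable[OF assms] A_measurable A_ident[OF assms]] by simp

lemma LST_Wseq_1: "LST M (Wseq A B 1) \<mu> = 1 / 2"
proof -
  have "Wseq A B 1 = B 1"
    by (simp add: fun_eq_iff)
  then show ?thesis
    using LST_exponential_self[OF B_exponential[of 1] mu_pos] by simp
qed

lemma A_plus_Wseq_measurable: "(\<lambda>\<omega>. A n \<omega> + Wseq A B n \<omega>) \<in> borel_measurable M" if "1 \<le> n"
  by (intro borel_measurable_add A_measurable[OF that] Wseq_measurable)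

lemma A_plus_Wseq_nonneg: "AE \<omega> in M. 0 \<le> A n \<omega> + Wseq A B n \<omega>" if "1 \<le> n"
  using A_nonneg[OF that] Wseq_nonneg[OF that] by eventually_elim simp

lemma LST_A_plus_Wseq:
  assumes "1 \<le> n"
  shows "LST M (\<lambda>\<omega>. A n \<omega> + Wseq A B n \<omega>) \<mu> = LST M (A 1) \<mu> * LST M (Wseq A B n) \<mu>"
  using LST_add_indep[OF indep_A_Wseq A_nonneg Wseq_nonneg] LST_A[OF assms] assms mu_pos by simp

lemma LST_Wseq_Suc:
  assumes "1 \<le> n"
  shows "LST M (Wseq A B (Suc n)) \<mu> = 1 - LST M (A 1) \<mu> * LST M (Wseq A B n) \<mu> / 2"
  using LST_pos_part_exponential_minus[OF B_exponential mu_pos A_plus_Wseq_measurable A_plus_Wseq_nonneg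
      indep_B_Suc_A_plus_Wseq] LST_A_plus_Wseq Wseq_Suc[OF assms(1)] assms
  by simp

lemma prob_Wseq_Suc_le:
  assumes "1 \<le> n" and "0 \<le> x"
  shows "measure M {\<omega> \<in> space M. Wseq A B (Suc n) \<omega> \<le> x}
    = 1 - exp (- \<mu> * x) * (LST M (A 1) \<mu> * LST M (Wseq A B n) \<mu>)"
  using prob_pos_part_exponential_minus_le[OF B_exponential mu_pos A_plus_Wseq_measurable A_plus_Wseq_nonneg
      indep_B_Suc_A_plus_Wseq] LST_A_plus_Wseq Wseq_Suc[OF assms(1)] assms
  by simp

end

theorem corollary3p2:
  fixes M :: "'a measure" and A B :: "nat \<Rightarrow> 'a \<Rightarrow> real" and \<mu> :: real
  assumes "prob_space M"
    and "\<mu> > 0"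
    and A_rv: "\<And>n. n \<ge> 1 \<Longrightarrow> A n \<in> borel_measurable M"
    and A_nonneg: "\<And>n. n \<ge> 1 \<Longrightarrow> AE \<omega> in M. A n \<omega> \<ge> 0"
    and A_ident: "\<And>n. n \<ge> 1 \<Longrightarrow> distr M borel (A n) = distr M borel (A 1)"
    and B_exp: "\<And>n. n \<ge> 1 \<Longrightarrow> distributed M lborel (B n) (exponential_density \<mu>)"
    and indep: "prob_space.indep_vars M (\<lambda>_. borel)
                  (\<lambda>i. case i of Inl n \<Rightarrow> A n | Inr n \<Rightarrow> B n)
                  ({Inl n | n. n \<ge> 1} \<union> {Inr n | n. n \<ge> 1})"
    and "n \<ge> 1" and "x \<ge> 0"
  shows "measure M {\<omega> \<in> space M. Wseq A B (n + 1) \<omega> \<le> x} =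
    1 - exp (- \<mu> * x) *
      (2 * LST M (A 1) \<mu> / (2 + LST M (A 1) \<mu>)
       + (- LST M (A 1) \<mu> / 2) ^ (n - 1)
         * (LST M (A 1) \<mu> / 2 - 2 * LST M (A 1) \<mu> / (2 + LST M (A 1) \<mu>)))"
proof -
  interpret Wseq_exponential_services M A B \<mu>
    by (intro Wseq_exponential_services.intro Wseq_exponential_services_axioms.intro) (fact assms)+
  let ?\<alpha> = "LST M (A 1) \<mu>"
  have "2 + ?\<alpha> \<noteq> 0"
    using LST_nonneg[of M "A 1" \<mu>] by linarith
  from affine_recurrence_closed_form[OF this LST_Wseq_1 LST_Wseq_Suc \<open>n \<ge> 1\<close>]
  have "?\<alpha> * LST M (Wseq A B n) \<mu>
      = ?\<alpha> * (2 / (2 + ?\<alpha>) + (- ?\<alpha> / 2) ^ (n - 1) * (1 / 2 - 2 / (2 + ?\<alpha>)))"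
    by simp
  also have "\<dots> = 2 * ?\<alpha> / (2 + ?\<alpha>) + (- ?\<alpha> / 2) ^ (n - 1) * (?\<alpha> / 2 - 2 * ?\<alpha> / (2 + ?\<alpha>))"
    by (simp add: algebra_simps)
  finally show ?thesis
    using prob_Wseq_Suc_le[OF \<open>n \<ge> 1\<close> \<open>x \<ge> 0\<close>] by simp
qed

end
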